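(* Let $N\ge 4$ be even and let $P_1,\dots,P_N$ be an $N$-periodic billiard trajectory in $E$, with outer polygon $P_1',\dots,P_N'$. For $j=1,2$ let $\bar Q'_{j,i}$ be the foot of the perpendicular from $f_j$ to the line $P_i'P_{i+1}'$, and let $\bar A_j'$ be the signed area of the polygon $\bar Q'_{j,1},\dots,\bar Q'_{j,N}$. Then $\bar A_1'=\bar A_2'$, i.e. $\bar A_1'/\bar A_2'=1$.
   Context: Let $E$ be the ellipse $x^2/a^2+y^2/b^2=1$ with $a>b>0$, center $O=(0,0)$ and foci $f_1=(-\sqrt{a^2-b^2},0)$, $f_2=(\sqrt{a^2-b^2},0)$. An $N$-periodic billiard trajectory is a convex polygon with vertices $P_1,\dots,P_N\in E$ (indices mod $N$), listed counterclockwise and winding once around $O$, with $P_i\neq P_{i+1}$, such that at every vertex $P_i$ the normal line to $E$ at $P_i$ bisects the angle $\angle P_{i-1}P_iP_{i+1}$, and all of whose sides are tangent to a common ellipse confocal with $E$. Its outer polygon has vertices $P_i'$ = intersection of the tangent lines to $E$ at $P_i$ and at $P_{i+1}$. The signed area of a polygon with vertices $W_i=(x_i,y_i)$, $i=1,\dots,N$ (indices mod $N$), is $S=\tfrac12\sum_{i=1}^N (x_iy_{i+1}-x_{i+1}y_i)$. *)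

theory Defs
  imports "HOL-Analysis.Analysis"
begin

type_synonym pt = "real \<times> real"

definition cross2 :: "pt \<Rightarrow> pt \<Rightarrow> real" where
  "cross2 u v = fst u * snd v - snd u * fst v"

definition on_ellipse :: "real \<Rightarrow> real \<Rightarrow> pt \<Rightarrow> bool" where
  "on_ellipse A B p \<longleftrightarrow> (fst p)^2 / A + (snd p)^2 / B = 1"

definition focus1 :: "real \<Rightarrow> real \<Rightarrow> pt" where
  "focus1 a b = (- sqrt (a^2 - b^2), 0)"
definition focus2 :: "real \<Rightarrow> real \<Rightarrow> pt" where
  "focus2 a b = (sqrt (a^2 - b^2), 0)"

definition ell_normal :: "real \<Rightarrow> real \<Rightarrow> pt \<Rightarrow> pt" where
  "ell_normal a b p = (fst p / a^2, snd p / b^2)"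

text \<open>The normal line to E at P bisects the angle Q P R: the (internal) bisector
  direction, the sum of the unit vectors from P towards Q and R, is parallel to the normal.\<close>
definition normal_bisects :: "real \<Rightarrow> real \<Rightarrow> pt \<Rightarrow> pt \<Rightarrow> pt \<Rightarrow> bool" where
  "normal_bisects a b Q P R \<longleftrightarrow>
     cross2 (ell_normal a b P)
       ((1 / norm (Q - P)) *\<^sub>R (Q - P) + (1 / norm (R - P)) *\<^sub>R (R - P)) = 0"

text \<open>The line through distinct points p, q is tangent to the ellipse x^2/A + y^2/B = 1
  (A, B > 0): writing it as u x + v y = w, the tangency condition is A u^2 + B v^2 = w^2.\<close>
definition line_tangent_ellipse :: "real \<Rightarrow> real \<Rightarrow> pt \<Rightarrow> pt \<Rightarrow> bool" where
  "line_tangent_ellipse A B p q \<longleftrightarrow>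
     (let u = snd q - snd p; v = fst p - fst q; w = u * fst p + v * snd p
      in A * u^2 + B * v^2 = w^2)"

definition on_tangent_line :: "real \<Rightarrow> real \<Rightarrow> pt \<Rightarrow> pt \<Rightarrow> bool" where
  "on_tangent_line a b p X \<longleftrightarrow> fst X * fst p / a^2 + snd X * snd p / b^2 = 1"

text \<open>N-periodic billiard trajectory P 0, ..., P (N-1) (indices mod N, encoded by
  N-periodicity of P).  Counterclockwise order winding once around O is expressed by
  eccentric angles t i strictly increasing with t (i+N) = t i + 2 pi.\<close>
definition periodic_billiard :: "real \<Rightarrow> real \<Rightarrow> nat \<Rightarrow> (nat \<Rightarrow> pt) \<Rightarrow> bool" where
  "periodic_billiard a b N P \<longleftrightarrow>
     (\<forall>i. P (i + N) = P i) \<and>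
     (\<forall>i. on_ellipse (a^2) (b^2) (P i)) \<and>
     (\<forall>i. P (Suc i) \<noteq> P i) \<and>
     (\<exists>t :: nat \<Rightarrow> real. (\<forall>i. P i = (a * cos (t i), b * sin (t i))) \<and>
          (\<forall>i. t i < t (Suc i)) \<and> (\<forall>i. t (i + N) = t i + 2 * pi)) \<and>
     (\<forall>i. cross2 (P (Suc i) - P i) (P (Suc (Suc i)) - P (Suc i)) > 0) \<and>
     (\<forall>i. normal_bisects a b (P i) (P (Suc i)) (P (Suc (Suc i)))) \<and>
     (\<exists>A B. A > 0 \<and> B > 0 \<and> A - B = a^2 - b^2 \<and>
          (\<forall>i. line_tangent_ellipse A B (P i) (P (Suc i))))"

definition foot :: "pt \<Rightarrow> pt \<Rightarrow> pt \<Rightarrow> pt" where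
  "foot f p q = p + ((inner (f - p) (q - p)) / (norm (q - p))^2) *\<^sub>R (q - p)"

definition signed_area :: "nat \<Rightarrow> (nat \<Rightarrow> pt) \<Rightarrow> real" where
  "signed_area N W = (1/2) * (\<Sum>i<N. fst (W i) * snd (W (Suc i)) - fst (W (Suc i)) * snd (W i))"

end

theory Submission
  imports Defs
begin

text \<open>Write the vertices as P i = (a cos t_i, b sin t_i) and the chord P_i P_{i+1} through its
  mean eccentric angle m_i and half-width d_i, so t_i = m_i - d_i and t_{i+1} = m_i + d_i.
  Tangency of that chord to the confocal caustic reads p cos^2 m + q sin^2 m = cos^2 d with
  0 < p, q < 1, and forces d_i = D(m_i) for an explicit \<pi>-periodic function D with |D'| < 1.
  Hence m \<mapsto> m - D m and m \<mapsto> m + D m are increasing and commute with the half turn m \<mapsto> m + \<pi>,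
  and a comparison argument along the orbit shows t_{i+N/2} = t_i + \<pi> when N is even.
  So the trajectory, and with it the outer polygon, is symmetric under x \<mapsto> -x, which swaps the
  foci; the two pedal polygons are then point reflections of each other up to a cyclic shift
  of indices, and have the same signed area.\<close>

definition tangency_form :: "real \<Rightarrow> real \<Rightarrow> real \<Rightarrow> real" where
  "tangency_form p q m = p * (cos m)^2 + q * (sin m)^2"

definition half_angle :: "real \<Rightarrow> real \<Rightarrow> real \<Rightarrow> real" where
  "half_angle p q m = arccos (sqrt (tangency_form p q m))"

lemma chord_tangent_imp_tangency_form:
  assumes "a > 0" "b > 0" "sin d \<noteq> 0"
    and "line_tangent_ellipse A B (a * cos (m - d), b * sin (m - d)) (a * cos (m + d), b * sin (m + d))"
  shows "tangency_form (A / a^2) (B / b^2) m = (cos d)^2"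
proof -
  have u: "b * sin (m + d) - b * sin (m - d) = 2 * b * cos m * sin d"
    by (simp add: sin_add sin_diff algebra_simps)
  have v: "a * cos (m - d) - a * cos (m + d) = 2 * a * sin m * sin d"
    by (simp add: cos_add cos_diff algebra_simps)
  have w: "(2 * b * cos m * sin d) * (a * cos (m - d)) + (2 * a * sin m * sin d) * (b * sin (m - d))
             = 2 * a * b * sin d * cos d"
    unfolding cos_diff sin_diff using sin_cos_squared_add[of m] by algebra
  from assms(4) have "A * (2 * b * cos m * sin d)^2 + B * (2 * a * sin m * sin d)^2
                        = (2 * a * b * sin d * cos d)^2"
    unfolding line_tangent_ellipse_def Let_def using u v w by simp
  then have "(4 * (sin d)^2) * (A * b^2 * (cos m)^2 + B * a^2 * (sin m)^2)
               = (4 * (sin d)^2) * (a^2 * b^2 * (cos d)^2)"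
    by (simp add: power_mult_distrib algebra_simps)
  then have "A * b^2 * (cos m)^2 + B * a^2 * (sin m)^2 = a^2 * b^2 * (cos d)^2"
    using assms(3) by simp
  then show ?thesis using assms(1,2) by (simp add: tangency_form_def field_simps)
qed

text \<open>A confocal ellipse touching a proper chord of E must lie strictly inside E.\<close>
lemma caustic_tangency_params_bounds:
  assumes "a > 0" "b > 0" "A > 0" "B > 0" "A - B = a^2 - b^2"
    and "tangency_form (A / a^2) (B / b^2) m = (cos d)^2" "sin d \<noteq> 0"
  shows "0 < A / a^2" "A / a^2 < 1" "0 < B / b^2" "B / b^2 < 1"
proof -
  show "0 < A / a^2" "0 < B / b^2" using assms(1-4) by simp_all
  have "a^2 - A > 0"
  proof (rule ccontr)
    assume "\<not> a^2 - A > 0"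
    then have "1 \<le> A / a^2" "1 \<le> B / b^2" using assms(1,2,5) by (simp_all add: field_simps)
    then have "1 * ((cos m)^2 + (sin m)^2) \<le> tangency_form (A / a^2) (B / b^2) m"
      unfolding tangency_form_def distrib_left by (intro add_mono mult_right_mono) simp_all
    then have "1 \<le> (cos d)^2" using assms(6) by simp
    moreover have "(sin d)^2 > 0" using assms(7) by simp
    ultimately show False using sin_cos_squared_add[of d] by linarith
  qed
  then show "A / a^2 < 1" "B / b^2 < 1" using assms(1,2,5) by (simp_all add: field_simps)
qed

lemma tangency_form_bounds:
  assumes "0 < p" "p < 1" "0 < q" "q < 1"
  shows "0 < tangency_form p q m" "tangency_form p q m < 1"
proof -
  have "min p q * ((cos m)^2 + (sin m)^2) \<le> tangency_form p q m"
    "tangency_form p q m \<le> max p q * ((cos m)^2 + (sin m)^2)"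
    unfolding tangency_form_def distrib_left
    by (intro add_mono mult_right_mono; simp)+
  moreover have "0 < min p q" "max p q < 1" using assms by auto
  ultimately show "0 < tangency_form p q m" "tangency_form p q m < 1" by simp_all linarith+
qed

lemma half_angle_add_pi: "half_angle p q (m + pi) = half_angle p q m"
  by (simp add: half_angle_def tangency_form_def)

lemma half_angle_bounds:
  assumes "0 < p" "p < 1" "0 < q" "q < 1"
  shows "0 < half_angle p q m" "half_angle p q m < pi / 2"
proof -
  have "0 < sqrt (tangency_form p q m)" "sqrt (tangency_form p q m) < 1"
    using tangency_form_bounds[OF assms] by (auto simp: real_sqrt_lt_1_iff)
  then have "arccos 1 < half_angle p q m" "half_angle p q m < arccos 0"
    unfolding half_angle_def by (intro arccos_less_arccos; linarith)+
  then show "0 < half_angle p q m" "half_angle p q m < pi / 2" by simp_all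
qed

lemma tangency_form_derivative_bound:
  assumes "0 < p" "p < 1" "0 < q" "q < 1"
  shows "\<bar>(q - p) * sin m * cos m\<bar>
           < sqrt (tangency_form p q m) * sqrt (1 - tangency_form p q m)"
proof -
  define c s G where "c = cos m" and "s = sin m" and "G = tangency_form p q m"
  have cs: "c^2 + s^2 = 1" unfolding c_def s_def by simp
  have G: "G = p * c^2 + q * s^2" unfolding G_def c_def s_def tangency_form_def ..
  have "G * (1 - G) - ((q - p) * s * c)^2
          = (p * (1 - p) * c^2 + q * (1 - q) * s^2) * (c^2 + s^2)"
    using cs G by algebra
  also have "\<dots> > 0"
  proof -
    have "0 < c^2 \<or> 0 < s^2" using cs by (cases "c = 0") auto
    then show ?thesis using assms cs
      by (auto intro: add_pos_nonneg add_nonneg_pos)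
  qed
  finally have "\<bar>(q - p) * s * c\<bar>^2 < (sqrt G * sqrt (1 - G))^2"
    using tangency_form_bounds[OF assms, of m] by (simp add: G_def power_mult_distrib)
  then show ?thesis
    unfolding c_def s_def G_def
    by (rule power2_less_imp_less) (use tangency_form_bounds[OF assms, of m] in simp)
qed

lemma half_angle_derivative_lt_1:
  assumes "0 < p" "p < 1" "0 < q" "q < 1"
  shows "\<exists>D'. (half_angle p q has_real_derivative D') (at m) \<and> \<bar>D'\<bar> < 1"
proof -
  let ?G = "tangency_form p q m" and ?r = "(q - p) * sin m * cos m"
  have G: "0 < ?G" "?G < 1" using tangency_form_bounds[OF assms] by simp_all
  then have sG: "0 < sqrt ?G" "sqrt ?G < 1" by (simp_all add: real_sqrt_lt_1_iff)
  have "(tangency_form p q has_real_derivative 2 * ?r) (at m)"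
    unfolding tangency_form_def[abs_def] by (auto intro!: derivative_eq_intros simp: algebra_simps)
  with DERIV_real_sqrt[OF G(1)]
  have "((\<lambda>x. sqrt (tangency_form p q x)) has_real_derivative inverse (sqrt ?G) / 2 * (2 * ?r)) (at m)"
    by (rule DERIV_chain2)
  from DERIV_chain2[OF DERIV_arccos[of "sqrt ?G"] this] sG
  have "(half_angle p q has_real_derivative
          inverse (- sqrt (1 - (sqrt ?G)^2)) * (inverse (sqrt ?G) / 2 * (2 * ?r))) (at m)"
    unfolding half_angle_def[abs_def] by simp
  moreover have "inverse (- sqrt (1 - (sqrt ?G)^2)) * (inverse (sqrt ?G) / 2 * (2 * ?r))
                   = - ?r / (sqrt ?G * sqrt (1 - ?G))"
    using G by (simp add: field_simps)
  ultimately have deriv: "(half_angle p q has_real_derivative - ?r / (sqrt ?G * sqrt (1 - ?G))) (at m)"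
    by simp
  have bound: "\<bar>- ?r / (sqrt ?G * sqrt (1 - ?G))\<bar> < 1"
  proof -
    have "0 < sqrt ?G * sqrt (1 - ?G)" using G by simp
    with tangency_form_derivative_bound[OF assms, of m] show ?thesis
      by (simp only: abs_divide abs_minus_cancel abs_of_pos divide_less_eq_1_pos)
  qed
  from deriv bound show ?thesis by (intro exI[of _ "- ?r / (sqrt ?G * sqrt (1 - ?G))"] conjI)
qed

lemma strict_mono_add_contraction:
  fixes f :: "real \<Rightarrow> real"
  assumes "\<And>x. \<exists>f'. (f has_real_derivative f') (at x) \<and> \<bar>f'\<bar> < 1"
  shows "strict_mono (\<lambda>x. x + f x)"
proof (rule strict_monoI)
  fix x y :: real assume "x < y"
  then show "x + f x < y + f y"
  proof (rule DERIV_pos_imp_increasing)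
    fix z
    obtain f' where "(f has_real_derivative f') (at z)" "\<bar>f'\<bar> < 1" using assms by blast
    then show "\<exists>y. ((\<lambda>x. x + f x) has_real_derivative y) (at z) \<and> 0 < y"
      by (intro exI[of _ "1 + f'"]) (auto intro!: derivative_eq_intros)
  qed
qed

lemma strict_mono_half_angle_shifts:
  assumes "0 < p" "p < 1" "0 < q" "q < 1"
  shows "strict_mono (\<lambda>x. x - half_angle p q x)" "strict_mono (\<lambda>x. x + half_angle p q x)"
proof -
  have "\<exists>D'. ((\<lambda>x. - half_angle p q x) has_real_derivative D') (at m) \<and> \<bar>D'\<bar> < 1" for m
    using half_angle_derivative_lt_1[OF assms, of m] by (auto intro!: DERIV_minus)
  from strict_mono_add_contraction[OF this] show "strict_mono (\<lambda>x. x - half_angle p q x)"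
    by simp
  show "strict_mono (\<lambda>x. x + half_angle p q x)"
    by (rule strict_mono_add_contraction) (rule half_angle_derivative_lt_1[OF assms])
qed

text \<open>t is an orbit of the increasing map \<beta> \<circ> \<alpha>^-1, which commutes with translation by c.
  If t_{i+K} missed t_i + c on one side, monotonicity would keep t_{i+2K} on the same side of
  t_{i+K} + c, contradicting t_{i+2K} = t_i + 2c.\<close>
lemma orbit_shift_half_period:
  fixes \<alpha> \<beta> :: "real \<Rightarrow> real" and t m :: "nat \<Rightarrow> real"
  assumes "strict_mono \<alpha>" "strict_mono \<beta>"
    and "\<And>x. \<alpha> (x + c) = \<alpha> x + c" "\<And>x. \<beta> (x + c) = \<beta> x + c"
    and "\<And>i. t i = \<alpha> (m i)" "\<And>i. t (Suc i) = \<beta> (m i)"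
    and "\<And>i. t (i + 2 * K) = t i + 2 * c"
  shows "t (i + K) = t i + c"
proof -
  have less_step: "t (Suc j) < t (Suc k) + c" if "t j < t k + c" for j k
  proof -
    have "\<alpha> (m j) < \<alpha> (m k + c)" using that by (simp add: assms(3,5))
    then have "m j < m k + c" using strict_mono_less[OF assms(1)] by blast
    then have "\<beta> (m j) < \<beta> (m k + c)" using strict_mono_less[OF assms(2)] by blast
    then show ?thesis by (simp add: assms(4,6))
  qed
  have greater_step: "t (Suc k) + c < t (Suc j)" if "t k + c < t j" for j k
  proof -
    have "\<alpha> (m k + c) < \<alpha> (m j)" using that by (simp add: assms(3,5))
    then have "m k + c < m j" using strict_mono_less[OF assms(1)] by blast
    then have "\<beta> (m k + c) < \<beta> (m j)" using strict_mono_less[OF assms(2)] by blast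
    then show ?thesis by (simp add: assms(4,6))
  qed
  have less_iter: "t (j + n) < t (k + n) + c" if "t j < t k + c" for j k n
  proof (induction n)
    case (Suc n)
    then show ?case using less_step[OF Suc] by simp
  qed (use that in simp)
  have greater_iter: "t (k + n) + c < t (j + n)" if "t k + c < t j" for j k n
  proof (induction n)
    case (Suc n)
    then show ?case using greater_step[OF Suc] by simp
  qed (use that in simp)
  have full: "t (i + K + K) = t i + 2 * c" using assms(7)[of i] by (simp only: mult_2 add.assoc)
  show ?thesis
  proof (rule linorder_cases[of "t (i + K)" "t i + c"])
    assume "t (i + K) < t i + c"
    with less_iter[OF this, of K] full show ?thesis by simp
  next
    assume "t i + c < t (i + K)"
    with greater_iter[OF this, of K] full show ?thesis by simp
  qed
qed

lemma tangency_form_eq_cos_square_cases: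
  assumes "tangency_form p q m = (cos d)^2" "0 < d" "d < pi"
  shows "d = half_angle p q m \<or> d = pi - half_angle p q m"
proof (cases "cos d \<ge> 0")
  case True
  then have "half_angle p q m = arccos (cos d)" by (simp add: half_angle_def assms(1))
  also have "\<dots> = d" using assms(2,3) by (intro arccos_cos) auto
  finally show ?thesis by simp
next
  case False
  then have "half_angle p q m = arccos (cos (pi - d))" by (simp add: half_angle_def assms(1))
  also have "\<dots> = pi - d" using assms(2,3) by (intro arccos_cos) auto
  finally show ?thesis by simp
qed

text \<open>Of the two solutions d and pi - d of the tangency condition, only the acute one is
  compatible with consecutive arcs t_i < t_{i+1} < t_{i+2} < t_i + 2 pi: two obtuse half-widths
  in a row exceed the full turn, and an obtuse one followed by an acute one forces
  m_{i+1} = m_i + pi by injectivity of m - D m, overshooting again.\<close>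
lemma chord_half_width_eq_half_angle:
  fixes t :: "nat \<Rightarrow> real"
  assumes pq: "0 < p" "p < 1" "0 < q" "q < 1"
    and "strict_mono t" and less_turn: "\<And>i. t (Suc (Suc i)) < t i + 2 * pi"
    and tangent: "\<And>i. tangency_form p q ((t i + t (Suc i)) / 2) = (cos ((t (Suc i) - t i) / 2))^2"
  shows "(t (Suc i) - t i) / 2 = half_angle p q ((t i + t (Suc i)) / 2)"
proof -
  define m d D where "m i = (t i + t (Suc i)) / 2" and "d i = (t (Suc i) - t i) / 2"
    and "D = half_angle p q" for i
  have t_md: "t i = m i - d i" "t (Suc i) = m i + d i" for i
    unfolding m_def d_def by (simp_all add: field_simps)
  have d_bounds: "0 < d i" "d i < pi" for i
  proof -
    have "t i < t (Suc i)" "t (Suc i) < t (Suc (Suc i))"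
      using \<open>strict_mono t\<close> by (simp_all add: strict_mono_less)
    then show "0 < d i" "d i < pi" using less_turn[of i] by (simp_all add: d_def)
  qed
  have D_bounds: "0 < D x" "D x < pi / 2" for x using half_angle_bounds[OF pq] by (simp_all add: D_def)
  have D_add_pi: "D (x + pi) = D x" for x by (simp add: D_def half_angle_add_pi)
  have cases: "d i = D (m i) \<or> d i = pi - D (m i)" for i
    using tangency_form_eq_cos_square_cases[OF tangent[of i, folded m_def d_def] d_bounds[of i]]
    by (simp add: D_def)
  show ?thesis
  proof (rule ccontr)
    assume "(t (Suc i) - t i) / 2 \<noteq> half_angle p q ((t i + t (Suc i)) / 2)"
    then have obtuse: "d i = pi - D (m i)" using cases by (auto simp: d_def m_def D_def)
    have span: "t (Suc (Suc i)) - t i = 2 * (d i + d (Suc i))" by (simp add: d_def field_simps)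
    show False
    proof (cases "d (Suc i) = D (m (Suc i))")
      case False
      then have "d (Suc i) = pi - D (m (Suc i))" using cases by blast
      then show False using span obtuse less_turn[of i] D_bounds[of "m i"] D_bounds[of "m (Suc i)"]
        by simp
    next
      case True
      have "m (Suc i) - D (m (Suc i)) = (m i + pi) - D (m i + pi)"
        using t_md(1)[of "Suc i"] t_md(2)[of i] True obtuse D_add_pi[of "m i"] by simp
      then have "m (Suc i) = m i + pi"
        using strict_mono_eq[OF strict_mono_half_angle_shifts(1)[OF pq]] by (simp add: D_def)
      then have "t (Suc (Suc i)) = t i + 2 * pi"
        using t_md(2)[of "Suc i"] t_md(1)[of i] True obtuse D_add_pi[of "m i"] by simp
      then show False using less_turn[of i] by simp
    qed
  qed
qed

lemma cos_sin_system_unique: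
  fixes u v s t :: real
  assumes "u * cos t + v * sin t = 0" "u * cos s + v * sin s = 0" "sin (s - t) \<noteq> 0"
  shows "u = 0" "v = 0"
proof -
  have "u * sin (s - t) = sin s * (u * cos t + v * sin t) - sin t * (u * cos s + v * sin s)"
    by (simp add: sin_diff algebra_simps)
  then show "u = 0" using assms by simp
  have "v * sin (s - t) = cos t * (u * cos s + v * sin s) - cos s * (u * cos t + v * sin t)"
    by (simp add: sin_diff algebra_simps)
  then show "v = 0" using assms by simp
qed

lemma tangent_lines_intersection_unique:
  assumes "a > 0" "b > 0" "sin (s - t) \<noteq> 0"
    and "on_tangent_line a b (a * cos t, b * sin t) X" "on_tangent_line a b (a * cos s, b * sin s) X"
    and "on_tangent_line a b (a * cos t, b * sin t) Y" "on_tangent_line a b (a * cos s, b * sin s) Y"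
  shows "X = Y"
proof -
  have line: "on_tangent_line a b (a * cos r, b * sin r) Z
                \<longleftrightarrow> fst Z / a * cos r + snd Z / b * sin r = 1" for r Z
    using assms(1,2) by (simp add: on_tangent_line_def power2_eq_square)
  define u v where "u = (fst X - fst Y) / a" and "v = (snd X - snd Y) / b"
  have "u * cos t + v * sin t = 0" "u * cos s + v * sin s = 0"
    using assms(4-7) by (simp_all add: line u_def v_def diff_divide_distrib algebra_simps)
  from cos_sin_system_unique[OF this assms(3)] show ?thesis
    using assms(1,2) by (simp add: u_def v_def prod_eq_iff)
qed

lemma periodic_billiard_half_widths:
  assumes "a > 0" "b > 0" "2 < N" "periodic_billiard a b N P"
  obtains t p q where "\<And>i. P i = (a * cos (t i), b * sin (t i))"
    and "\<And>i. t (i + N) = t i + 2 * pi"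
    and "0 < p" "p < 1" "0 < q" "q < 1"
    and "\<And>i. t (Suc i) - t i = 2 * half_angle p q ((t i + t (Suc i)) / 2)"
proof -
  from assms(4) obtain t A B where
    P: "\<And>i. P i = (a * cos (t i), b * sin (t i))" and t_Suc: "\<And>i. t i < t (Suc i)"
    and t_turn: "\<And>i. t (i + N) = t i + 2 * pi"
    and AB: "A > 0" "B > 0" "A - B = a^2 - b^2"
    and tangent: "\<And>i. line_tangent_ellipse A B (P i) (P (Suc i))"
    unfolding periodic_billiard_def by blast
  define p q where "p = A / a^2" and "q = B / b^2"
  define m d where "m i = (t i + t (Suc i)) / 2" and "d i = (t (Suc i) - t i) / 2" for i
  have mono: "strict_mono t" using t_Suc by (simp add: strict_mono_Suc_iff)
  have less_turn: "t (Suc (Suc i)) < t i + 2 * pi" for i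
    using strict_mono_less[OF mono, of "Suc (Suc i)" "i + N"] assms(3) t_turn[of i] by simp
  have "0 < d i" "d i < pi" for i
    using t_Suc[of i] t_Suc[of "Suc i"] less_turn[of i] by (simp_all add: d_def)
  then have sin_d: "sin (d i) \<noteq> 0" for i by (simp add: sin_gt_zero less_imp_neq[symmetric])
  have form: "tangency_form p q (m i) = (cos (d i))^2" for i
  proof -
    have "t i = m i - d i" "t (Suc i) = m i + d i" by (simp_all add: m_def d_def field_simps)
    with tangent[of i] have "line_tangent_ellipse A B
        (a * cos (m i - d i), b * sin (m i - d i)) (a * cos (m i + d i), b * sin (m i + d i))"
      by (simp add: P)
    from chord_tangent_imp_tangency_form[OF assms(1,2) sin_d this] show ?thesis
      by (simp add: p_def q_def)
  qed
  have pq: "0 < p" "p < 1" "0 < q" "q < 1"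
    using caustic_tangency_params_bounds[OF assms(1,2) AB form[of 0, unfolded p_def q_def] sin_d]
    by (simp_all add: p_def q_def)
  have "(t (Suc i) - t i) / 2 = half_angle p q ((t i + t (Suc i)) / 2)" for i
    by (rule chord_half_width_eq_half_angle[OF pq mono less_turn])
      (use form in \<open>simp add: m_def d_def\<close>)
  then show ?thesis by (intro that[OF P t_turn pq]) simp
qed

lemma periodic_billiard_half_turn:
  assumes "a > 0" "b > 0" "2 < N" "even N" "periodic_billiard a b N P"
  obtains t where "\<And>i. P i = (a * cos (t i), b * sin (t i))"
    and "\<And>i. t (i + N div 2) = t i + pi"
    and "\<And>i. 0 < t (Suc i) - t i" "\<And>i. t (Suc i) - t i < pi"
proof -
  obtain t p q where P: "\<And>i. P i = (a * cos (t i), b * sin (t i))"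
    and t_turn: "\<And>i. t (i + N) = t i + 2 * pi" and pq: "0 < p" "p < 1" "0 < q" "q < 1"
    and half: "\<And>i. t (Suc i) - t i = 2 * half_angle p q ((t i + t (Suc i)) / 2)"
    using periodic_billiard_half_widths[OF assms(1-3,5)] by metis
  have half_turn: "t (i + N div 2) = t i + pi" for i
  proof (rule orbit_shift_half_period)
    show "strict_mono (\<lambda>x. x - half_angle p q x)" "strict_mono (\<lambda>x. x + half_angle p q x)"
      by (rule strict_mono_half_angle_shifts[OF pq])+
    show "x + pi - half_angle p q (x + pi) = x - half_angle p q x + pi"
      "x + pi + half_angle p q (x + pi) = x + half_angle p q x + pi" for x
      by (simp_all add: half_angle_add_pi)
    show "t j = (t j + t (Suc j)) / 2 - half_angle p q ((t j + t (Suc j)) / 2)"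
      "t (Suc j) = (t j + t (Suc j)) / 2 + half_angle p q ((t j + t (Suc j)) / 2)" for j
      using half[of j] by (simp_all add: field_simps)
    show "t (j + 2 * (N div 2)) = t j + 2 * pi" for j using assms(4) t_turn by simp
  qed
  have gap_pos: "0 < t (Suc i) - t i" for i
    using half_angle_bounds(1)[OF pq, of "(t i + t (Suc i)) / 2"] half[of i] by simp
  have gap_less: "t (Suc i) - t i < pi" for i
    using half_angle_bounds(2)[OF pq, of "(t i + t (Suc i)) / 2"] half[of i] by simp
  show ?thesis by (rule that[OF P half_turn gap_pos gap_less])
qed

lemma outer_vertex_half_turn:
  fixes t :: "nat \<Rightarrow> real"
  assumes "a > 0" "b > 0" "\<And>i. 0 < t (Suc i) - t i" "\<And>i. t (Suc i) - t i < pi"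
    and "\<And>i. t (i + K) = t i + pi"
    and "\<And>i. on_tangent_line a b (a * cos (t i), b * sin (t i)) (X i)
             \<and> on_tangent_line a b (a * cos (t (Suc i)), b * sin (t (Suc i))) (X i)"
  shows "X (i + K) = - X i"
proof (rule tangent_lines_intersection_unique[OF assms(1,2), where s = "t (Suc (i + K))" and t = "t (i + K)"])
  show "sin (t (Suc (i + K)) - t (i + K)) \<noteq> 0"
    using assms(3,4)[of "i + K"] by (simp add: sin_gt_zero less_imp_neq[symmetric])
  have reflect: "on_tangent_line a b (a * cos (r + pi), b * sin (r + pi)) (- Z)"
    if "on_tangent_line a b (a * cos r, b * sin r) Z" for r Z
    using that by (simp add: on_tangent_line_def)
  show "on_tangent_line a b (a * cos (t (i + K)), b * sin (t (i + K))) (- X i)"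
    using reflect[OF conjunct1[OF assms(6)[of i]]] assms(5)[of i] by simp
  show "on_tangent_line a b (a * cos (t (Suc (i + K))), b * sin (t (Suc (i + K)))) (- X i)"
  proof -
    have "t (Suc (i + K)) = t (Suc i) + pi" using assms(5)[of "Suc i"] by simp
    then show ?thesis using reflect[OF conjunct2[OF assms(6)[of i]]] by simp
  qed
qed (use assms(6) in simp_all)

lemma foot_uminus: "foot (- f) (- p) (- q) = - foot f p q"
proof -
  have "- f - - p = - (f - p)" "- q - - p = - (q - p)" by simp_all
  then show ?thesis
    unfolding foot_def by (simp only: inner_minus_left inner_minus_right minus_minus
      norm_minus_cancel scaleR_minus_right minus_add_distrib)
qed

lemma focus1_eq_uminus_focus2: "focus1 a b = - focus2 a b"
  by (simp add: focus1_def focus2_def)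

lemma sum_lessThan_shift_periodic:
  fixes h :: "nat \<Rightarrow> 'a::cancel_comm_monoid_add"
  assumes "\<And>i. h (i + N) = h i"
  shows "(\<Sum>i<N. h (i + K)) = (\<Sum>i<N. h i)"
proof (induction K)
  case (Suc K)
  have "(\<Sum>i<N. h (Suc i + K)) + h K = h K + (\<Sum>i<N. h (Suc i + K))" by (simp add: add.commute)
  also have "\<dots> = (\<Sum>i<Suc N. h (i + K))" using sum.lessThan_Suc_shift[of "\<lambda>i. h (i + K)"] by simp
  also have "\<dots> = (\<Sum>i<N. h (i + K)) + h K" using assms[of K] by (simp add: add.commute)
  finally show ?case using Suc by simp
qed simp

lemma signed_area_shift:
  assumes "\<And>i. W (i + N) = W i"
  shows "signed_area N (\<lambda>i. W (i + K)) = signed_area N W"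
proof -
  have "(\<Sum>i<N. fst (W (i + K)) * snd (W (Suc i + K)) - fst (W (Suc i + K)) * snd (W (i + K)))
        = (\<Sum>i<N. fst (W i) * snd (W (Suc i)) - fst (W (Suc i)) * snd (W i))"
    using sum_lessThan_shift_periodic[of "\<lambda>i. fst (W i) * snd (W (Suc i)) - fst (W (Suc i)) * snd (W i)"]
    by (simp add: assms flip: add_Suc)
  then show ?thesis by (simp add: signed_area_def)
qed

lemma signed_area_uminus: "signed_area N (\<lambda>i. - W i) = signed_area N W"
  by (simp add: signed_area_def)

lemma pedal_area_antipodal_foci:
  assumes "even N" "\<And>i. X (i + N div 2) = - X i"
  shows "signed_area N (\<lambda>i. foot (- f) (X i) (X (Suc i)))
       = signed_area N (\<lambda>i. foot f (X i) (X (Suc i)))"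
proof -
  define K where "K = N div 2"
  have X_periodic: "X (i + N) = X i" for i
  proof -
    have "i + N = i + K + K" using even_two_times_div_two[OF assms(1)] by (simp add: K_def)
    then have "X (i + N) = X (i + K + K)" by (rule arg_cong)
    also have "\<dots> = X i" using assms(2)[of i] assms(2)[of "i + K"] by (simp add: K_def)
    finally show ?thesis .
  qed
  define W where "W i = foot (- f) (X i) (X (Suc i))" for i
  have W_periodic: "W (i + N) = W i" for i
    using X_periodic[of i] X_periodic[of "Suc i"] by (simp add: W_def)
  have "foot f (X i) (X (Suc i)) = - W (i + K)" for i
    using assms(2)[of i] assms(2)[of "Suc i"] by (simp add: W_def K_def foot_uminus)
  then have "signed_area N (\<lambda>i. foot f (X i) (X (Suc i))) = signed_area N (\<lambda>i. - W (i + K))"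
    by simp
  also have "\<dots> = signed_area N W"
    by (simp only: signed_area_uminus signed_area_shift[of W N, OF W_periodic])
  finally show ?thesis by (simp add: W_def[abs_def])
qed

theorem mainTheorem3:
  fixes a b :: real and N :: nat and P P' :: "nat \<Rightarrow> real \<times> real"
  assumes "a > b" and "b > 0"
    and "N \<ge> 4" and "even N"
    and "periodic_billiard a b N P"
    and "\<forall>i. on_tangent_line a b (P i) (P' i) \<and> on_tangent_line a b (P (Suc i)) (P' i)"
  shows "signed_area N (\<lambda>i. foot (focus1 a b) (P' i) (P' (Suc i)))
       = signed_area N (\<lambda>i. foot (focus2 a b) (P' i) (P' (Suc i)))"
proof -
  have "a > 0" "2 < N" using assms(1-3) by simp_all
  obtain t where P: "\<And>i. P i = (a * cos (t i), b * sin (t i))"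
    and half_turn: "\<And>i. t (i + N div 2) = t i + pi"
    and gaps: "\<And>i. 0 < t (Suc i) - t i" "\<And>i. t (Suc i) - t i < pi"
    using periodic_billiard_half_turn[OF \<open>a > 0\<close> assms(2) \<open>2 < N\<close> assms(4,5)] by metis
  have "P' (i + N div 2) = - P' i" for i
    by (rule outer_vertex_half_turn[OF \<open>a > 0\<close> assms(2) gaps half_turn])
      (use assms(6) in \<open>simp add: P\<close>)
  from pedal_area_antipodal_foci[of N P', OF assms(4) this] show ?thesis
    by (simp add: focus1_eq_uminus_focus2)
qed

end
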